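(* For any connected graph $G$ of order $n \ge 2$ and for any positive integer $k$, $1\le \dim_{k,f}(G)\le \frac{n}{2}$.
   Context: All graphs are finite, simple, undirected and connected. $d(x,y)$ is the length of a shortest $x$–$y$ path in $G$. For a positive integer $k$, $d_k(x,y)=\min\{d(x,y),k+1\}$ and $R_k\{x,y\}=\{z\in V(G): d_k(x,z)\neq d_k(y,z)\}$. For a function $g$ on $V(G)$ and $U\subseteq V(G)$, $g(U)=\sum_{s\in U}g(s)$. A function $h:V(G)\to[0,1]$ is a $k$-truncated resolving function of $G$ if $h(R_k\{x,y\})\ge 1$ for all distinct $x,y\in V(G)$. The fractional $k$-truncated metric dimension is $\dim_{k,f}(G)=\min\{h(V(G)): h \text{ is a } k\text{-truncated resolving function of } G\}$. *)

theory Defs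
  imports Main "HOL-Library.Extended_Real"
begin

definition connected_simple_graph :: "'a set \<Rightarrow> ('a \<Rightarrow> 'a \<Rightarrow> bool) \<Rightarrow> bool" where
  "connected_simple_graph V E \<longleftrightarrow>
     finite V \<and>
     (\<forall>x y. E x y \<longrightarrow> x \<in> V \<and> y \<in> V) \<and>
     (\<forall>x y. E x y \<longrightarrow> E y x) \<and>
     (\<forall>x. \<not> E x x) \<and>
     (\<forall>x\<in>V. \<forall>y\<in>V. \<exists>n. (E ^^ n) x y)"

definition gdist :: "('a \<Rightarrow> 'a \<Rightarrow> bool) \<Rightarrow> 'a \<Rightarrow> 'a \<Rightarrow> nat" where
  "gdist E x y = (LEAST n. (E ^^ n) x y)"

definition tdist :: "('a \<Rightarrow> 'a \<Rightarrow> bool) \<Rightarrow> nat \<Rightarrow> 'a \<Rightarrow> 'a \<Rightarrow> nat" where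
  "tdist E k x y = min (gdist E x y) (k + 1)"

definition resolving_set_k :: "'a set \<Rightarrow> ('a \<Rightarrow> 'a \<Rightarrow> bool) \<Rightarrow> nat \<Rightarrow> 'a \<Rightarrow> 'a \<Rightarrow> 'a set" where
  "resolving_set_k V E k x y = {z \<in> V. tdist E k x z \<noteq> tdist E k y z}"

definition k_truncated_resolving_function ::
  "'a set \<Rightarrow> ('a \<Rightarrow> 'a \<Rightarrow> bool) \<Rightarrow> nat \<Rightarrow> ('a \<Rightarrow> real) \<Rightarrow> bool" where
  "k_truncated_resolving_function V E k h \<longleftrightarrow>
     (\<forall>v\<in>V. 0 \<le> h v \<and> h v \<le> 1) \<and>
     (\<forall>x\<in>V. \<forall>y\<in>V. x \<noteq> y \<longrightarrow> sum h (resolving_set_k V E k x y) \<ge> 1)"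

definition frac_trunc_metric_dim :: "'a set \<Rightarrow> ('a \<Rightarrow> 'a \<Rightarrow> bool) \<Rightarrow> nat \<Rightarrow> real" where
  "frac_trunc_metric_dim V E k =
     Inf {sum h V | h. k_truncated_resolving_function V E k h}"

end

theory Submission
  imports Defs
begin

text \<open>Every pair \<open>x \<noteq> y\<close> is resolved by \<open>x\<close> and by \<open>y\<close> themselves, since a vertex is at
  distance 0 only from itself. Hence the constant function \<open>1/2\<close> is resolving, of weight
  \<open>n/2\<close>. Conversely a resolving function puts weight at least 1 on a single resolving set,
  which lies inside \<open>V\<close>, so its total weight is at least 1.\<close>

lemma gdist_self: "gdist E x x = 0"
  unfolding gdist_def by (simp add: Least_eq_0)

lemma gdist_eq_0_iff:
  assumes "(E ^^ m) x y"
  shows "gdist E x y = 0 \<longleftrightarrow> x = y"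
proof
  assume "gdist E x y = 0"
  moreover have "(E ^^ gdist E x y) x y"
    unfolding gdist_def using assms by (rule LeastI)
  ultimately show "x = y" by simp
qed (simp add: gdist_self)

lemma tdist_eq_0_iff:
  assumes "(E ^^ m) x y"
  shows "tdist E k x y = 0 \<longleftrightarrow> x = y"
  using gdist_eq_0_iff[OF assms] by (auto simp: tdist_def min_def)

lemma resolving_set_k_subset: "resolving_set_k V E k x y \<subseteq> V"
  unfolding resolving_set_k_def by auto

lemma endpoints_in_resolving_set_k:
  assumes G: "connected_simple_graph V E" and xy: "x \<in> V" "y \<in> V" "x \<noteq> y"
  shows "{x, y} \<subseteq> resolving_set_k V E k x y"
proof -
  obtain m where "(E ^^ m) y x" using G xy unfolding connected_simple_graph_def by blast
  moreover obtain m' where "(E ^^ m') x y" using G xy unfolding connected_simple_graph_def by blast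
  ultimately have "tdist E k y x \<noteq> 0" "tdist E k x y \<noteq> 0"
    using tdist_eq_0_iff xy(3) by metis+
  with xy show ?thesis
    unfolding resolving_set_k_def by (auto simp: tdist_def gdist_self)
qed

lemma half_is_k_truncated_resolving_function:
  assumes G: "connected_simple_graph V E"
  shows "k_truncated_resolving_function V E k (\<lambda>_. 1/2)"
  unfolding k_truncated_resolving_function_def
proof (intro conjI ballI impI)
  fix x y assume xy: "x \<in> V" "y \<in> V" "x \<noteq> y"
  have "finite (resolving_set_k V E k x y)"
    using G resolving_set_k_subset finite_subset unfolding connected_simple_graph_def by metis
  then have "sum (\<lambda>_. 1/2) {x, y} \<le> sum (\<lambda>_. 1/2 :: real) (resolving_set_k V E k x y)"
    using endpoints_in_resolving_set_k[OF G xy] by (intro sum_mono2) auto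
  then show "1 \<le> sum (\<lambda>_. 1/2 :: real) (resolving_set_k V E k x y)"
    using xy(3) by simp
qed auto

lemma k_truncated_resolving_function_sum_ge_1:
  assumes h: "k_truncated_resolving_function V E k h"
    and "finite V" and xy: "x \<in> V" "y \<in> V" "x \<noteq> y"
  shows "1 \<le> sum h V"
proof -
  have "1 \<le> sum h (resolving_set_k V E k x y)"
    using h xy unfolding k_truncated_resolving_function_def by blast
  also have "\<dots> \<le> sum h V"
    using h \<open>finite V\<close> resolving_set_k_subset[of V E k x y]
    unfolding k_truncated_resolving_function_def by (intro sum_mono2) auto
  finally show ?thesis .
qed

theorem proposition2p6:
  fixes V :: "'a set" and E :: "'a \<Rightarrow> 'a \<Rightarrow> bool" and k :: nat
  assumes "connected_simple_graph V E"
    and "card V \<ge> 2"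
    and "k \<ge> 1"
  shows "1 \<le> frac_trunc_metric_dim V E k \<and>
         frac_trunc_metric_dim V E k \<le> real (card V) / 2"
proof -
  define S where "S = {sum h V | h. k_truncated_resolving_function V E k h}"
  have fin: "finite V" using assms(1) unfolding connected_simple_graph_def by blast
  obtain x y where xy: "x \<in> V" "y \<in> V" "x \<noteq> y"
    using assms(2) card_le_Suc0_iff_eq[OF fin] by (metis not_less_eq_eq numeral_2_eq_2)
  have lower: "1 \<le> s" if "s \<in> S" for s
    using that k_truncated_resolving_function_sum_ge_1[OF _ fin xy] unfolding S_def by blast
  have half: "sum (\<lambda>_. 1/2) V \<in> S"
    using half_is_k_truncated_resolving_function[OF assms(1)] unfolding S_def by blast
  have "1 \<le> Inf S" using half lower by (intro cInf_greatest) auto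
  moreover have "Inf S \<le> sum (\<lambda>_. 1/2) V" using half lower by (intro cInf_lower bdd_belowI)
  ultimately show ?thesis unfolding frac_trunc_metric_dim_def S_def by simp
qed

end
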